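(* There exists a set $\mathcal Z\subset\mathbb R^{Tp}$ with $|\mathcal Z|\le16\pi(Tp)^{3/2}$ such that $\|z\|_\infty\le1$ for all $z\in\mathcal Z$ and $\|\bar v\|_\ominus\le4\max_{z\in\mathcal Z}z^\top\bar v$ for all $\bar v\in\mathbb R^{Tp}$.
   Context: For $\bar v=[v_1^\top,\dots,v_T^\top]^\top\in\mathbb R^{Tp}$ ($v_i\in\mathbb R^p$) and a fixed number of rows $R\ge1$, $\mathsf{Toep}_T(\bar v)$ is the $R\times(R+T-1)$ block matrix with $1\times p$ blocks whose $i$-th block row has $v_T^\top,v_{T-1}^\top,\dots,v_1^\top$ in block columns $i,\dots,i+T-1$ and zeros elsewhere; $\|\bar v\|_\ominus:=\|\mathsf{Toep}_T(\bar v)\|_{\mathrm{op}}$. *)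

theory Defs
  imports Complex_Main
begin

text \<open>Vectors in R^n are represented as functions nat => real; only indices < n matter.
  The vector vbar in R^(T p) has blocks v_1,...,v_T, with v_t (1-indexed) component k
  (0-indexed) stored at vbar ((t-1)*p + k).\<close>

text \<open>Entry (i, c*p+k) of Toep_T(vbar), all indices 0-based: block row i, block column c.
  Block column i+j (j = 0..T-1) holds v_{T-j} (1-indexed), i.e. stored block T-1-j.\<close>
definition toep_entry :: "nat \<Rightarrow> nat \<Rightarrow> (nat \<Rightarrow> real) \<Rightarrow> nat \<Rightarrow> nat \<Rightarrow> real" where
  "toep_entry T p v i col =
     (let c = col div p; k = col mod p in
      if i \<le> c \<and> c < i + T then v ((T - 1 - (c - i)) * p + k) else 0)"

definition op_norm :: "nat \<Rightarrow> nat \<Rightarrow> (nat \<Rightarrow> nat \<Rightarrow> real) \<Rightarrow> real" where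
  "op_norm m n M = Sup {sqrt (\<Sum>i<m. (\<Sum>j<n. M i j * x j)\<^sup>2) | x. (\<Sum>j<n. (x j)\<^sup>2) \<le> 1}"

definition toep_norm :: "nat \<Rightarrow> nat \<Rightarrow> nat \<Rightarrow> (nat \<Rightarrow> real) \<Rightarrow> real" where
  "toep_norm R T p v = op_norm R ((R + T - 1) * p) (toep_entry T p v)"

end

theory Submission
  imports Defs "HOL-Analysis.L2_Norm"
begin

(*
  For w_d = v_{T-d}, the block Toeplitz matrix acts by correlation with w, so after expanding
  both vectors in a discrete Fourier basis long enough to avoid wrap-around, its norm is bounded
  by the supremum over frequencies alpha of the symbol norm (sum_k |sum_d w_{d,k} e^{i alpha d}|^2)^(1/2).
  The pairings of v with the real and imaginary parts (and their negatives) of the two-dimensional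
  Fourier modes at frequencies (2 pi a/K, 2 pi l/p) control the symbol on the grid alpha = 2 pi a/K;
  by Parseval they also bound the l2 and hence l1 norm of w, which controls the symbol between
  grid points once K >= 2 pi T sqrt(Tp). These 4Kp modes form the net.
*)

lemma norm_cis_minus_one_le: "cmod (cis t - 1) \<le> \<bar>t\<bar>"
proof -
  have "(cmod (cis t - 1))\<^sup>2 = (cos t - 1)\<^sup>2 + (sin t)\<^sup>2"
    by (simp add: cmod_power2)
  also have "\<dots> = 2 - 2 * cos t"
    using sin_cos_squared_add[of t] by (simp add: power2_eq_square algebra_simps)
  also have "\<dots> = (2 * \<bar>sin (t / 2)\<bar>)\<^sup>2"
    using cos_double_sin[of "t / 2"] by (simp add: power2_eq_square)
  finally have "cmod (cis t - 1) = 2 * \<bar>sin (t / 2)\<bar>"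
    by (rule power2_eq_imp_eq) auto
  also have "\<dots> \<le> \<bar>t\<bar>" using abs_sin_x_le_abs_x[of "t / 2"] by simp
  finally show ?thesis .
qed

lemma norm_cis_diff_le: "cmod (cis a - cis b) \<le> \<bar>a - b\<bar>"
proof -
  have "cis a - cis b = cis b * (cis (a - b) - 1)"
    by (simp add: algebra_simps cis_mult)
  thus ?thesis using norm_cis_minus_one_le[of "a - b"] by (simp add: norm_mult)
qed

definition dft_char :: "nat \<Rightarrow> nat \<Rightarrow> nat \<Rightarrow> complex" where
  "dft_char N m a = cis (2 * pi * real m * real a / real N)"

lemma norm_dft_char [simp]: "cmod (dft_char N m a) = 1"
  by (simp add: dft_char_def)

lemma dft_char_add: "dft_char N m (a + b) = dft_char N m a * dft_char N m b"
  by (simp add: dft_char_def cis_mult add_divide_distrib distrib_left)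

lemma dft_char_orthogonal:
  assumes "a < N" "b < N"
  shows "(\<Sum>m<N. dft_char N m a * cnj (dft_char N m b)) = (if a = b then of_nat N else 0)"
proof (cases "a = b")
  case True then show ?thesis by (simp add: dft_char_def cis_cnj cis_mult)
next
  case False
  define z where "z = cis (2 * pi * (real a - real b) / real N)"
  have N: "N > 0" using assms by simp
  have power: "dft_char N m a * cnj (dft_char N m b) = z ^ m" for m
    unfolding z_def dft_char_def
    by (simp add: cis_cnj cis_mult DeMoivre algebra_simps diff_divide_distrib)
  have "real N * (2 * pi * (real a - real b) / real N) = 2 * pi * of_int (int a - int b)"
    using N by simp
  hence "z ^ N = 1" unfolding z_def DeMoivre by (metis cis_multiple_2pi Ints_of_int)
  moreover have "z \<noteq> 1"
  proof
    assume "z = 1"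
    hence "cos (2 * pi * (real a - real b) / real N) = 1" unfolding z_def
      by (metis cis.sel(1) one_complex.sel(1))
    then obtain n :: int where "2 * pi * (real a - real b) / real N = n * 2 * pi"
      by (auto simp: cos_one_2pi_int)
    hence "2 * pi * (real a - real b) = 2 * pi * (n * real N)" using N by (simp add: field_simps)
    hence "real a - real b = n * real N" by simp
    hence "int a - int b = n * int N" by (metis of_int_of_nat_eq of_int_diff of_int_eq_iff of_int_mult)
    moreover have "\<bar>int a - int b\<bar> < int N" using assms by auto
    ultimately have "n = 0" using N by (auto simp: abs_mult mult_less_cancel_right2)
    thus False using \<open>int a - int b = n * int N\<close> False by simp
  qed
  ultimately show ?thesis using False by (simp add: power sum_gp_strict)
qed

lemma parseval_orthogonal:
  fixes f :: "'i \<Rightarrow> complex" and \<chi> :: "'m \<Rightarrow> 'i \<Rightarrow> complex"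
  assumes "finite I"
    and orth: "\<And>i j. i \<in> I \<Longrightarrow> j \<in> I \<Longrightarrow>
      (\<Sum>m\<in>M. \<chi> m i * cnj (\<chi> m j)) = (if i = j then complex_of_real c else 0)"
  shows "(\<Sum>m\<in>M. (cmod (\<Sum>i\<in>I. f i * \<chi> m i))\<^sup>2) = c * (\<Sum>i\<in>I. (cmod (f i))\<^sup>2)"
proof -
  have "complex_of_real (\<Sum>m\<in>M. (cmod (\<Sum>i\<in>I. f i * \<chi> m i))\<^sup>2)
      = (\<Sum>m\<in>M. (\<Sum>i\<in>I. f i * \<chi> m i) * cnj (\<Sum>j\<in>I. f j * \<chi> m j))"
    by (simp only: of_real_sum complex_norm_square)
  also have "\<dots> = (\<Sum>m\<in>M. \<Sum>j\<in>I. \<Sum>i\<in>I. f i * cnj (f j) * (\<chi> m i * cnj (\<chi> m j)))"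
    by (simp add: cnj_sum sum_distrib_left sum_distrib_right mult_ac)
  also have "\<dots> = (\<Sum>j\<in>I. \<Sum>i\<in>I. f i * cnj (f j) * (\<Sum>m\<in>M. \<chi> m i * cnj (\<chi> m j)))"
    by (subst sum.swap, intro sum.cong refl, subst sum.swap) (simp add: sum_distrib_left)
  also have "\<dots> = (\<Sum>i\<in>I. f i * cnj (f i) * complex_of_real c)"
    using \<open>finite I\<close> by (simp add: orth if_distrib cong: if_cong)
  also have "\<dots> = complex_of_real (c * (\<Sum>i\<in>I. (cmod (f i))\<^sup>2))"
    by (simp add: complex_norm_square[symmetric] sum_distrib_left mult_ac del: of_real_power)
  finally show ?thesis by (simp only: of_real_eq_iff)
qed

lemma dft_parseval:
  assumes "L \<le> N"
  shows "(\<Sum>m<N. (cmod (\<Sum>a<L. f a * dft_char N m a))\<^sup>2) = real N * (\<Sum>a<L. (cmod (f a))\<^sup>2)"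
  by (rule parseval_orthogonal) (use assms in \<open>auto simp: dft_char_orthogonal\<close>)

lemma dft2_parseval:
  fixes f :: "nat \<times> nat \<Rightarrow> complex"
  assumes "T \<le> K" "P \<le> Q"
  shows "(\<Sum>(a, l)\<in>{..<K} \<times> {..<Q}.
            (cmod (\<Sum>(d, k)\<in>{..<T} \<times> {..<P}. f (d, k) * (dft_char K a d * dft_char Q l k)))\<^sup>2)
         = real K * real Q * (\<Sum>i\<in>{..<T} \<times> {..<P}. (cmod (f i))\<^sup>2)"
proof -
  have "(\<Sum>m\<in>{..<K} \<times> {..<Q}. (cmod (\<Sum>i\<in>{..<T} \<times> {..<P}.
            f i * (dft_char K (fst m) (fst i) * dft_char Q (snd m) (snd i))))\<^sup>2)
        = real K * real Q * (\<Sum>i\<in>{..<T} \<times> {..<P}. (cmod (f i))\<^sup>2)"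
  proof (rule parseval_orthogonal)
    fix i j assume ij: "i \<in> {..<T} \<times> {..<P}" "j \<in> {..<T} \<times> {..<P}"
    have "(\<Sum>m\<in>{..<K} \<times> {..<Q}. dft_char K (fst m) (fst i) * dft_char Q (snd m) (snd i)
                   * cnj (dft_char K (fst m) (fst j) * dft_char Q (snd m) (snd j)))
        = (\<Sum>a<K. dft_char K a (fst i) * cnj (dft_char K a (fst j)))
          * (\<Sum>l<Q. dft_char Q l (snd i) * cnj (dft_char Q l (snd j)))"
      by (simp add: sum_product sum.cartesian_product mult_ac case_prod_unfold)
    also have "\<dots> = (if i = j then complex_of_real (real K * real Q) else 0)"
      using ij assms by (auto simp: dft_char_orthogonal prod_eq_iff)
    finally show "(\<Sum>m\<in>{..<K} \<times> {..<Q}. dft_char K (fst m) (fst i) * dft_char Q (snd m) (snd i)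
                   * cnj (dft_char K (fst m) (fst j) * dft_char Q (snd m) (snd j)))
             = (if i = j then complex_of_real (real K * real Q) else 0)" .
  qed simp
  then show ?thesis by (simp add: case_prod_unfold)
qed

lemma cis_grid_eq_dft_char:
  fixes r :: int
  assumes "K > 0"
  shows "cis (2 * pi * real_of_int r / real K * real d) = dft_char K (nat (r mod int K)) d"
proof -
  have "real_of_int r = real_of_int (r mod int K) + real K * real_of_int (r div int K)"
    by (metis mod_div_mult_eq mult.commute of_int_add of_int_mult of_int_of_nat_eq)
  hence "2 * pi * real_of_int r / real K * real d
      = 2 * pi * real (nat (r mod int K)) * real d / real K + 2 * pi * real_of_int (r div int K * int d)"
    using assms by (simp add: field_simps)
  hence "cis (2 * pi * real_of_int r / real K * real d)
      = dft_char K (nat (r mod int K)) d * cis (2 * pi * real_of_int (r div int K * int d))"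
    by (metis cis_mult dft_char_def)
  also have "cis (2 * pi * real_of_int (r div int K * int d)) = 1"
    by (rule cis_multiple_2pi) simp
  finally show ?thesis by simp
qed

lemma dft_toeplitz_identity:
  fixes u :: "nat \<Rightarrow> real" and w x :: "nat \<Rightarrow> nat \<Rightarrow> real"
  assumes "R + T \<le> N"
  shows "complex_of_real (real N * (\<Sum>i<R. u i * (\<Sum>k<p. \<Sum>d<T. w d k * x (i + d) k)))
    = (\<Sum>m<N. (\<Sum>i<R. complex_of_real (u i) * cnj (dft_char N m i)) *
          (\<Sum>k<p. (\<Sum>d<T. complex_of_real (w d k) * cnj (dft_char N m d))
                  * (\<Sum>c<R + T - 1. complex_of_real (x c k) * dft_char N m c)))"
  (is "?L = ?R")
proof -
  let ?g = "\<lambda>i k d c. complex_of_real (u i * w d k * x c k)"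
  let ?E = "\<lambda>i d c. \<Sum>m<N. dft_char N m c * cnj (dft_char N m (i + d))"
  have "?R = (\<Sum>m<N. \<Sum>k<p. \<Sum>c<R + T - 1. \<Sum>d<T. \<Sum>i<R.
               ?g i k d c * (dft_char N m c * cnj (dft_char N m (i + d))))"
    by (simp add: sum_distrib_left sum_distrib_right dft_char_add mult_ac)
  also have "\<dots> = (\<Sum>k<p. \<Sum>c<R + T - 1. \<Sum>d<T. \<Sum>i<R. ?g i k d c * ?E i d c)"
    by (simp only: sum.swap[of _ "{..<N}"] sum_distrib_left)
  also have "\<dots> = (\<Sum>k<p. \<Sum>d<T. \<Sum>i<R. \<Sum>c<R + T - 1. ?g i k d c * ?E i d c)"
    by (simp only: sum.swap[of _ "{..<R + T - 1}"])
  also have "\<dots> = (\<Sum>k<p. \<Sum>d<T. \<Sum>i<R. ?g i k d (i + d) * of_nat N)"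
  proof (intro sum.cong refl)
    fix k d i assume "d \<in> {..<T}" "i \<in> {..<R}"
    then have "i + d < R + T - 1" by auto
    then show "(\<Sum>c<R + T - 1. ?g i k d c * ?E i d c) = ?g i k d (i + d) * of_nat N"
      using assms by (simp add: dft_char_orthogonal if_distrib cong: if_cong)
  qed
  also have "\<dots> = ?L"
    by (simp add: sum_distrib_left sum_distrib_right mult_ac sum.swap[of _ _ "{..<R}"])
  finally show ?thesis ..
qed

lemma L2_set_dft:
  assumes "L \<le> N"
  shows "L2_set (\<lambda>m. cmod (\<Sum>a<L. complex_of_real (f a) * dft_char N m a)) {..<N}
       = sqrt (real N * (\<Sum>a<L. (f a)\<^sup>2))"
  using dft_parseval[OF assms, of "\<lambda>a. complex_of_real (f a)"] by (simp add: L2_set_def)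

text \<open>Both vectors are expanded in the discrete Fourier basis of length \<open>R + T\<close>, which is
  long enough for the correlation not to wrap around.\<close>

lemma toeplitz_bilinear_le:
  fixes u :: "nat \<Rightarrow> real" and w x :: "nat \<Rightarrow> nat \<Rightarrow> real"
  assumes "T \<ge> 1" and "B \<ge> 0"
    and symbol: "\<And>\<alpha>. (\<Sum>k<p. (cmod (\<Sum>d<T. complex_of_real (w d k) * cis (\<alpha> * real d)))\<^sup>2) \<le> B\<^sup>2"
  shows "\<bar>\<Sum>i<R. u i * (\<Sum>k<p. \<Sum>d<T. w d k * x (i + d) k)\<bar>
       \<le> B * sqrt (\<Sum>i<R. (u i)\<^sup>2) * sqrt (\<Sum>c<R + T - 1. \<Sum>k<p. (x c k)\<^sup>2)"
proof -
  define N where "N = R + T"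
  have "N > 0" using \<open>T \<ge> 1\<close> by (simp add: N_def)
  define Y where "Y = (\<Sum>i<R. u i * (\<Sum>k<p. \<Sum>d<T. w d k * x (i + d) k))"
  define U where "U m = (\<Sum>i<R. complex_of_real (u i) * cnj (dft_char N m i))" for m
  define W where "W m k = (\<Sum>d<T. complex_of_real (w d k) * cnj (dft_char N m d))" for m k
  define X where "X m k = (\<Sum>c<R + T - 1. complex_of_real (x c k) * dft_char N m c)" for m k
  define X2 where "X2 m = L2_set (\<lambda>k. cmod (X m k)) {..<p}" for m
  have "complex_of_real (real N * Y) = (\<Sum>m<N. U m * (\<Sum>k<p. W m k * X m k))"
    unfolding Y_def U_def W_def X_def by (rule dft_toeplitz_identity) (simp add: N_def)
  hence "real N * \<bar>Y\<bar> \<le> (\<Sum>m<N. cmod (U m) * cmod (\<Sum>k<p. W m k * X m k))"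
    by (metis (no_types, lifting) norm_of_real abs_mult abs_of_nat norm_mult norm_sum sum.cong)
  also have "\<dots> \<le> (\<Sum>m<N. cmod (U m) * (B * X2 m))"
  proof (intro sum_mono mult_left_mono)
    fix m
    have "W m k = (\<Sum>d<T. complex_of_real (w d k) * cis (- (2 * pi * real m / real N) * real d))" for k
      unfolding W_def dft_char_def cis_cnj by (intro sum.cong refl) (simp add: mult_ac)
    hence "(\<Sum>k<p. (cmod (W m k))\<^sup>2) \<le> B\<^sup>2" by (simp only: symbol)
    hence "L2_set (\<lambda>k. cmod (W m k)) {..<p} \<le> sqrt (B\<^sup>2)"
      unfolding L2_set_def by (rule real_sqrt_le_mono)
    hence W2: "L2_set (\<lambda>k. cmod (W m k)) {..<p} \<le> B" using \<open>B \<ge> 0\<close> by simp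
    have "cmod (\<Sum>k<p. W m k * X m k) \<le> (\<Sum>k<p. \<bar>cmod (W m k)\<bar> * \<bar>cmod (X m k)\<bar>)"
      by (rule order.trans[OF norm_sum]) (simp add: norm_mult)
    also have "\<dots> \<le> L2_set (\<lambda>k. cmod (W m k)) {..<p} * X2 m"
      unfolding X2_def by (rule L2_set_mult_ineq)
    also have "\<dots> \<le> B * X2 m" using W2 by (intro mult_right_mono) (simp_all add: X2_def)
    finally show "cmod (\<Sum>k<p. W m k * X m k) \<le> B * X2 m" .
  qed simp
  also have "\<dots> = B * (\<Sum>m<N. \<bar>cmod (U m)\<bar> * \<bar>X2 m\<bar>)"
    by (simp add: sum_distrib_left mult_ac X2_def)
  also have "\<dots> \<le> B * (L2_set (\<lambda>m. cmod (U m)) {..<N} * L2_set X2 {..<N})"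
    using \<open>B \<ge> 0\<close> by (intro mult_left_mono L2_set_mult_ineq)
  also have "L2_set (\<lambda>m. cmod (U m)) {..<N} = sqrt (real N * (\<Sum>i<R. (u i)\<^sup>2))"
  proof -
    have "cmod (U m) = cmod (\<Sum>i<R. complex_of_real (u i) * dft_char N m i)" for m
      by (metis (no_types, lifting) U_def complex_cnj_cnj complex_cnj_complex_of_real
          complex_cnj_mult complex_mod_cnj cnj_sum sum.cong)
    thus ?thesis using L2_set_dft[of R N u] by (simp add: N_def)
  qed
  also have "L2_set X2 {..<N} = sqrt (real N * (\<Sum>c<R + T - 1. \<Sum>k<p. (x c k)\<^sup>2))"
  proof -
    have "(\<Sum>m<N. (X2 m)\<^sup>2) = (\<Sum>k<p. \<Sum>m<N. (cmod (X m k))\<^sup>2)"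
      by (simp add: X2_def L2_set_def sum_nonneg sum.swap[of _ "{..<N}"])
    also have "\<dots> = (\<Sum>k<p. real N * (\<Sum>c<R + T - 1. (x c k)\<^sup>2))"
      using dft_parseval[of "R + T - 1" N] by (simp add: X_def N_def)
    also have "\<dots> = real N * (\<Sum>c<R + T - 1. \<Sum>k<p. (x c k)\<^sup>2)"
      by (simp add: sum_distrib_left sum.swap[of _ "{..<p}"])
    finally show ?thesis unfolding L2_set_def by simp
  qed
  also have "B * (sqrt (real N * (\<Sum>i<R. (u i)\<^sup>2)) * sqrt (real N * (\<Sum>c<R + T - 1. \<Sum>k<p. (x c k)\<^sup>2)))
      = real N * (B * sqrt (\<Sum>i<R. (u i)\<^sup>2) * sqrt (\<Sum>c<R + T - 1. \<Sum>k<p. (x c k)\<^sup>2))"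
    by (simp add: real_sqrt_mult mult_ac)
  finally show ?thesis using \<open>N > 0\<close> unfolding Y_def by (simp add: mult_le_cancel_left_pos)
qed

lemma norm_le_of_Re_rotations:
  assumes "\<And>q. q < 4 \<Longrightarrow> Re ((- \<i>) ^ q * z) \<le> G"
  shows "cmod z \<le> 2 * G"
proof -
  from assms[of 0] assms[of 1] assms[of 2] assms[of 3]
  have "\<bar>Re z\<bar> \<le> G" "\<bar>Im z\<bar> \<le> G" by (simp_all add: numeral_eq_Suc)
  thus ?thesis using cmod_le[of z] by linarith
qed

lemma dft_grid_approx:
  assumes "K > 0"
  obtains a where "a < K"
    and "\<And>d. d < T \<Longrightarrow> cmod (cis (\<alpha> * real d) - dft_char K a d) \<le> 2 * pi * real T / real K"
proof -
  define r where "r = \<lfloor>\<alpha> * real K / (2 * pi)\<rfloor>"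
  define \<alpha>0 where "\<alpha>0 = 2 * pi * real_of_int r / real K"
  have "real_of_int r * (2 * pi) \<le> \<alpha> * real K" "\<alpha> * real K < (real_of_int r + 1) * (2 * pi)"
    unfolding r_def by (simp_all add: pos_le_divide_eq[symmetric] pos_divide_less_eq[symmetric])
  hence "0 \<le> \<alpha> - \<alpha>0" and "\<alpha> - \<alpha>0 = (\<alpha> * real K - 2 * pi * real_of_int r) / real K"
    using assms by (simp_all add: \<alpha>0_def pos_divide_le_eq mult_ac field_simps)
  moreover have "\<dots> \<le> 2 * pi / real K"
    using \<open>\<alpha> * real K < (real_of_int r + 1) * (2 * pi)\<close>
    by (intro divide_right_mono) (auto simp: algebra_simps)
  ultimately have "0 \<le> \<alpha> - \<alpha>0" "\<alpha> - \<alpha>0 \<le> 2 * pi / real K" by simp_all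
  have "cmod (cis (\<alpha> * real d) - dft_char K (nat (r mod int K)) d) \<le> 2 * pi * real T / real K"
    if "d < T" for d
  proof -
    have "cmod (cis (\<alpha> * real d) - cis (\<alpha>0 * real d)) \<le> (\<alpha> - \<alpha>0) * real d"
      using norm_cis_diff_le[of "\<alpha> * real d" "\<alpha>0 * real d"] \<open>0 \<le> \<alpha> - \<alpha>0\<close>
      by (simp add: left_diff_distrib[symmetric] abs_mult)
    also have "\<dots> \<le> 2 * pi / real K * real T"
      using \<open>0 \<le> \<alpha> - \<alpha>0\<close> \<open>\<alpha> - \<alpha>0 \<le> 2 * pi / real K\<close> that by (intro mult_mono) auto
    finally show ?thesis
      using cis_grid_eq_dft_char[OF assms, of r d] by (simp add: \<alpha>0_def)
  qed
  moreover have "nat (r mod int K) < K" using assms by (simp add: nat_less_iff)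
  ultimately show ?thesis using that by blast
qed

lemma sum_sq_le_of_dft2_bound:
  fixes w :: "nat \<Rightarrow> nat \<Rightarrow> real"
  assumes "T \<le> K" "K > 0" "p > 0"
    and grid: "\<And>a l. a < K \<Longrightarrow> l < p \<Longrightarrow>
      cmod (\<Sum>d<T. \<Sum>k<p. complex_of_real (w d k) * (dft_char K a d * dft_char p l k)) \<le> C"
  shows "(\<Sum>d<T. \<Sum>k<p. (w d k)\<^sup>2) \<le> C\<^sup>2"
proof -
  have "C \<ge> 0" using grid[of 0 0] assms by (meson norm_ge_zero order.trans)
  have "real K * real p * (\<Sum>d<T. \<Sum>k<p. (w d k)\<^sup>2)
      = (\<Sum>(a, l)\<in>{..<K} \<times> {..<p}. (cmod (\<Sum>(d, k)\<in>{..<T} \<times> {..<p}.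
            complex_of_real (w d k) * (dft_char K a d * dft_char p l k)))\<^sup>2)"
    using dft2_parseval[OF \<open>T \<le> K\<close> order.refl, of "\<lambda>(d, k). complex_of_real (w d k)" p]
    by (simp add: case_prod_unfold sum.cartesian_product)
  also have "\<dots> \<le> (\<Sum>(a, l)\<in>{..<K} \<times> {..<p}. C\<^sup>2)"
    using grid \<open>C \<ge> 0\<close>
    by (intro sum_mono) (auto simp: sum.cartesian_product[symmetric] intro!: power_mono)
  also have "\<dots> = real K * real p * C\<^sup>2" by simp
  finally show ?thesis using assms by (simp add: mult_le_cancel_left_pos)
qed

text \<open>Off the grid \<open>2\<pi>a/K\<close> the symbol moves by at most \<open>2\<pi>T/K\<close> times the \<open>\<ell>\<^sub>1\<close> norm of
  the coefficients, which Cauchy-Schwarz and Parseval bound by \<open>\<surd>(Tp)\<close> times the grid bound.\<close>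

lemma symbol_le_of_grid_bound:
  fixes w :: "nat \<Rightarrow> nat \<Rightarrow> real"
  assumes "T \<ge> 1" "p \<ge> 1" and K: "2 * pi * real T * sqrt (real T * real p) \<le> real K"
    and grid: "\<And>a l. a < K \<Longrightarrow> l < p \<Longrightarrow>
      cmod (\<Sum>d<T. \<Sum>k<p. complex_of_real (w d k) * (dft_char K a d * dft_char p l k)) \<le> C"
  shows "(\<Sum>k<p. (cmod (\<Sum>d<T. complex_of_real (w d k) * cis (\<alpha> * real d)))\<^sup>2) \<le> (2 * C)\<^sup>2"
proof -
  have "real T * real p \<ge> 1 * 1" using assms by (intro mult_mono) auto
  hence "sqrt (real T * real p) \<ge> 1" by simp
  hence "2 * 2 * 1 \<le> 2 * pi * sqrt (real T * real p)"
    using pi_ge_two by (intro mult_mono) auto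
  hence "real T * (2 * 2 * 1) \<le> real T * (2 * pi * sqrt (real T * real p))"
    by (rule mult_left_mono) simp
  also have "\<dots> \<le> real K" using K by (simp add: mult_ac)
  finally have "T \<le> K" by simp
  hence "K > 0" using \<open>T \<ge> 1\<close> by simp
  have "C \<ge> 0" using grid[of 0 0] \<open>K > 0\<close> \<open>p \<ge> 1\<close> by (meson norm_ge_zero order.trans less_le_trans zero_less_one)
  have l1: "(\<Sum>d<T. \<Sum>k<p. \<bar>w d k\<bar>) \<le> sqrt (real T * real p) * C"
  proof -
    let ?I = "{..<T} \<times> {..<p}"
    have "(\<Sum>d<T. \<Sum>k<p. \<bar>w d k\<bar>) = (\<Sum>i\<in>?I. \<bar>w (fst i) (snd i)\<bar> * \<bar>1\<bar>)"
      by (simp add: sum.cartesian_product case_prod_unfold)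
    also have "\<dots> \<le> L2_set (\<lambda>i. w (fst i) (snd i)) ?I * L2_set (\<lambda>i. 1) ?I"
      by (rule L2_set_mult_ineq)
    also have "L2_set (\<lambda>i. w (fst i) (snd i)) ?I \<le> C"
      using sum_sq_le_of_dft2_bound[OF \<open>T \<le> K\<close> \<open>K > 0\<close> _ grid] \<open>p \<ge> 1\<close> \<open>C \<ge> 0\<close>
      by (simp add: L2_set_def sum.cartesian_product case_prod_unfold real_le_lsqrt)
    also have "L2_set (\<lambda>i. 1::real) ?I = sqrt (real T * real p)"
      by (simp add: L2_set_def card_cartesian_product)
    finally show ?thesis by (simp add: mult_ac mult_right_mono)
  qed
  define \<epsilon> where "\<epsilon> = 2 * pi * real T / real K"
  obtain a where "a < K" and near: "\<And>d. d < T \<Longrightarrow> cmod (cis (\<alpha> * real d) - dft_char K a d) \<le> \<epsilon>"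
    using dft_grid_approx[OF \<open>K > 0\<close>] unfolding \<epsilon>_def by blast
  define f where "f k = (\<Sum>d<T. complex_of_real (w d k) * cis (\<alpha> * real d))" for k
  have "cmod (\<Sum>k<p. f k * dft_char p l k) \<le> 2 * C" if "l < p" for l
  proof -
    let ?G = "\<Sum>d<T. \<Sum>k<p. complex_of_real (w d k) * (dft_char K a d * dft_char p l k)"
    have "(\<Sum>k<p. f k * dft_char p l k) - ?G
        = (\<Sum>d<T. \<Sum>k<p. complex_of_real (w d k) * ((cis (\<alpha> * real d) - dft_char K a d) * dft_char p l k))"
      unfolding f_def
      by (simp add: sum_distrib_left sum_distrib_right sum.swap[of _ "{..<p}"] sum_subtractf algebra_simps)
    also have "cmod \<dots> \<le> (\<Sum>d<T. \<Sum>k<p. \<bar>w d k\<bar> * \<epsilon>)"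
      using near by (intro order.trans[OF norm_sum] sum_mono order.trans[OF norm_sum])
        (simp add: norm_mult mult_left_mono)
    also have "\<dots> = (\<Sum>d<T. \<Sum>k<p. \<bar>w d k\<bar>) * \<epsilon>"
      by (simp add: sum_distrib_right)
    also have "\<dots> \<le> sqrt (real T * real p) * C * \<epsilon>"
      using l1 by (intro mult_right_mono) (simp_all add: \<epsilon>_def)
    also have "\<dots> \<le> C"
      using K \<open>K > 0\<close> \<open>C \<ge> 0\<close> by (simp add: \<epsilon>_def field_simps mult_left_mono)
    finally have "cmod ((\<Sum>k<p. f k * dft_char p l k) - ?G) \<le> C" .
    moreover have "cmod ?G \<le> C" using grid[OF \<open>a < K\<close> that] .
    ultimately show ?thesis using norm_triangle_ineq[of "(\<Sum>k<p. f k * dft_char p l k) - ?G" ?G] by simp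
  qed
  hence "(\<Sum>l<p. (cmod (\<Sum>k<p. f k * dft_char p l k))\<^sup>2) \<le> (\<Sum>l<p. (2 * C)\<^sup>2)"
    by (intro sum_mono power_mono) auto
  hence "real p * (\<Sum>k<p. (cmod (f k))\<^sup>2) \<le> real p * (2 * C)\<^sup>2"
    by (simp add: dft_parseval)
  thus ?thesis using \<open>p \<ge> 1\<close> by (simp add: f_def)
qed

lemma sum_blocks:
  fixes f :: "nat \<Rightarrow> 'a::comm_monoid_add"
  shows "(\<Sum>j<C * p. f j) = (\<Sum>c<C. \<Sum>k<p. f (c * p + k))"
  by (simp add: sum.nat_group[symmetric] sum.atLeastLessThan_shift_0 atLeast0LessThan comp_def)

lemma sum_window:
  fixes h :: "nat \<Rightarrow> 'a::comm_monoid_add"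
  assumes "i + T \<le> C"
  shows "(\<Sum>c<C. if i \<le> c \<and> c < i + T then h c else 0) = (\<Sum>d<T. h (i + d))"
proof -
  have "(\<Sum>c<C. if i \<le> c \<and> c < i + T then h c else 0) = (\<Sum>c<C. if c \<in> {i..<i + T} then h c else 0)"
    by (intro sum.cong) auto
  also have "\<dots> = sum h ({..<C} \<inter> {i..<i + T})"
    by (simp add: sum.inter_restrict)
  also have "{..<C} \<inter> {i..<i + T} = {i..<i + T}" using assms by auto
  finally show ?thesis by (simp add: sum.atLeastLessThan_shift_0 atLeast0LessThan comp_def)
qed

lemma toep_entry_row_sum:
  assumes "i < R"
  shows "(\<Sum>j<(R + T - 1) * p. toep_entry T p v i j * x j)
       = (\<Sum>k<p. \<Sum>d<T. v ((T - 1 - d) * p + k) * x ((i + d) * p + k))"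
proof -
  have "(\<Sum>j<(R + T - 1) * p. toep_entry T p v i j * x j)
      = (\<Sum>k<p. \<Sum>c<R + T - 1. if i \<le> c \<and> c < i + T then v ((T - 1 - (c - i)) * p + k) * x (c * p + k) else 0)"
    unfolding sum_blocks by (subst sum.swap, intro sum.cong refl) (auto simp: toep_entry_def Let_def)
  also have "\<dots> = (\<Sum>k<p. \<Sum>d<T. v ((T - 1 - d) * p + k) * x ((i + d) * p + k))"
    using assms by (simp add: sum_window)
  finally show ?thesis .
qed

lemma op_norm_le:
  assumes "\<And>x. (\<Sum>j<n. (x j)\<^sup>2) \<le> 1 \<Longrightarrow> sqrt (\<Sum>i<m. (\<Sum>j<n. M i j * x j)\<^sup>2) \<le> c"
  shows "op_norm m n M \<le> c"
  unfolding op_norm_def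
proof (rule cSup_least)
  show "{sqrt (\<Sum>i<m. (\<Sum>j<n. M i j * x j)\<^sup>2) | x. (\<Sum>j<n. (x j)\<^sup>2) \<le> 1} \<noteq> {}"
    by (auto intro: exI[of _ "\<lambda>_. 0"])
qed (use assms in auto)

lemma toep_norm_le_symbol_bound:
  assumes "T \<ge> 1" "B \<ge> 0"
    and symbol: "\<And>\<alpha>. (\<Sum>k<p. (cmod (\<Sum>d<T. complex_of_real (v ((T - 1 - d) * p + k))
                                             * cis (\<alpha> * real d)))\<^sup>2) \<le> B\<^sup>2"
  shows "toep_norm R T p v \<le> B"
  unfolding toep_norm_def
proof (rule op_norm_le)
  fix x :: "nat \<Rightarrow> real" assume x: "(\<Sum>j<(R + T - 1) * p. (x j)\<^sup>2) \<le> 1"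
  define y where "y i = (\<Sum>j<(R + T - 1) * p. toep_entry T p v i j * x j)" for i
  define Y where "Y = sqrt (\<Sum>i<R. (y i)\<^sup>2)"
  have "Y\<^sup>2 = \<bar>\<Sum>i<R. y i * y i\<bar>"
    by (simp add: Y_def power2_eq_square sum_nonneg)
  also have "\<dots> = \<bar>\<Sum>i<R. y i * (\<Sum>k<p. \<Sum>d<T. v ((T - 1 - d) * p + k) * x ((i + d) * p + k))\<bar>"
    by (intro arg_cong[where f = abs] sum.cong refl) (simp only: y_def lessThan_iff toep_entry_row_sum)
  also have "\<dots> \<le> B * Y * sqrt (\<Sum>c<R + T - 1. \<Sum>k<p. (x (c * p + k))\<^sup>2)"
    unfolding Y_def using toeplitz_bilinear_le[OF assms] .
  also have "\<dots> \<le> B * Y * 1"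
    using x sum_blocks[of "\<lambda>j. (x j)\<^sup>2"] \<open>B \<ge> 0\<close> by (intro mult_left_mono) (simp_all add: Y_def sum_nonneg)
  finally have "Y * Y \<le> B * Y" by (simp add: power2_eq_square)
  moreover have "Y \<ge> 0" by (simp add: Y_def sum_nonneg)
  ultimately have "Y \<le> B" using \<open>B \<ge> 0\<close> by (cases "Y = 0") (auto simp: mult_le_cancel_right)
  then show "sqrt (\<Sum>i<R. (\<Sum>j<(R + T - 1) * p. toep_entry T p v i j * x j)\<^sup>2) \<le> B"
    by (simp add: Y_def y_def)
qed

(* Entry (T - 1 - d) p + k is the rotation (-i)^q of the two-dimensional Fourier mode at lag d and
   coordinate k; the reversal matches the order v_T, ..., v_1 within the rows of Toep. *)
definition toep_net_vec :: "nat \<Rightarrow> nat \<Rightarrow> nat \<Rightarrow> nat \<Rightarrow> nat \<Rightarrow> nat \<Rightarrow> nat \<Rightarrow> real" where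
  "toep_net_vec K T p a l q j =
     (if j < T * p
      then Re ((- \<i>) ^ q * (dft_char K a (T - 1 - j div p) * dft_char p l (j mod p)))
      else 0)"

definition toep_net :: "nat \<Rightarrow> nat \<Rightarrow> nat \<Rightarrow> (nat \<Rightarrow> real) set" where
  "toep_net K T p = (\<lambda>(a, l, q). toep_net_vec K T p a l q) ` ({..<K} \<times> {..<p} \<times> {..<4})"

lemma finite_toep_net: "finite (toep_net K T p)"
  by (simp add: toep_net_def)

lemma card_toep_net: "card (toep_net K T p) \<le> 4 * K * p"
  unfolding toep_net_def
  by (rule order.trans[OF card_image_le]) (simp_all add: card_cartesian_product)

lemma abs_toep_net_vec_le: "\<bar>toep_net_vec K T p a l q j\<bar> \<le> 1"
  using abs_Re_le_cmod[of "(- \<i>) ^ q * (dft_char K a (T - 1 - j div p) * dft_char p l (j mod p))"]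
  by (simp add: toep_net_vec_def norm_mult norm_power)

lemma toep_net_vec_pairing:
  "(\<Sum>j<T * p. toep_net_vec K T p a l q j * v j)
   = Re ((- \<i>) ^ q * (\<Sum>d<T. \<Sum>k<p. complex_of_real (v ((T - 1 - d) * p + k))
                                       * (dft_char K a d * dft_char p l k)))"
proof -
  have "(\<Sum>j<T * p. toep_net_vec K T p a l q j * v j)
      = (\<Sum>d<T. \<Sum>k<p. toep_net_vec K T p a l q ((T - 1 - d) * p + k) * v ((T - 1 - d) * p + k))"
    unfolding sum_blocks
    using sum.nat_diff_reindex[of "\<lambda>c. \<Sum>k<p. toep_net_vec K T p a l q (c * p + k) * v (c * p + k)" T]
    by simp
  also have "\<dots> = (\<Sum>d<T. \<Sum>k<p. v ((T - 1 - d) * p + k) * Re ((- \<i>) ^ q * (dft_char K a d * dft_char p l k)))"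
  proof (intro sum.cong refl)
    fix d k assume "d \<in> {..<T}" "k \<in> {..<p}"
    moreover from this have "(T - 1 - d) * p + k < (T - 1 - d + 1) * p" by simp
    moreover have "(T - 1 - d + 1) * p \<le> T * p" using \<open>d \<in> {..<T}\<close> by (intro mult_le_mono1) auto
    ultimately show "toep_net_vec K T p a l q ((T - 1 - d) * p + k) * v ((T - 1 - d) * p + k)
        = v ((T - 1 - d) * p + k) * Re ((- \<i>) ^ q * (dft_char K a d * dft_char p l k))"
      by (simp add: toep_net_vec_def)
  qed
  also have "\<dots> = Re ((- \<i>) ^ q * (\<Sum>d<T. \<Sum>k<p. complex_of_real (v ((T - 1 - d) * p + k))
                                       * (dft_char K a d * dft_char p l k)))"
    by (simp add: sum_distrib_left Re_sum mult.left_commute[of "(- \<i>) ^ q"])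
  finally show ?thesis .
qed

lemma toep_norm_le_net:
  assumes "T \<ge> 1" "p \<ge> 1" and K: "2 * pi * real T * sqrt (real T * real p) \<le> real K"
  shows "toep_norm R T p v \<le> 4 * Max ((\<lambda>z. \<Sum>j<T * p. z j * v j) ` toep_net K T p)"
proof -
  define G where "G = Max ((\<lambda>z. \<Sum>j<T * p. z j * v j) ` toep_net K T p)"
  define w where "w d k = v ((T - 1 - d) * p + k)" for d k
  have grid: "cmod (\<Sum>d<T. \<Sum>k<p. complex_of_real (w d k) * (dft_char K a d * dft_char p l k)) \<le> 2 * G"
    if "a < K" "l < p" for a l
  proof (rule norm_le_of_Re_rotations)
    fix q :: nat assume "q < 4"
    with that have "toep_net_vec K T p a l q \<in> toep_net K T p"
      unfolding toep_net_def by force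
    hence "(\<Sum>j<T * p. toep_net_vec K T p a l q j * v j) \<le> G"
      unfolding G_def by (intro Max_ge) (simp_all add: finite_toep_net)
    thus "Re ((- \<i>) ^ q * (\<Sum>d<T. \<Sum>k<p. complex_of_real (w d k) * (dft_char K a d * dft_char p l k))) \<le> G"
      by (simp add: toep_net_vec_pairing w_def)
  qed
  have "0 < 2 * pi * real T * sqrt (real T * real p)" using assms by simp
  hence "K > 0" using K by simp
  moreover have "0 < p" using \<open>p \<ge> 1\<close> by simp
  ultimately have "0 \<le> 2 * G" by (rule order.trans[OF norm_ge_zero grid])
  show ?thesis unfolding G_def[symmetric]
    using \<open>0 \<le> 2 * G\<close> symbol_le_of_grid_bound[OF \<open>T \<ge> 1\<close> \<open>p \<ge> 1\<close> K grid]
    by (intro toep_norm_le_symbol_bound[OF \<open>T \<ge> 1\<close>]) (simp_all add: w_def)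
qed

lemma net_size_le:
  assumes "T \<ge> 1" "p \<ge> 1"
  shows "4 * real (nat \<lceil>2 * pi * real T * sqrt (real T * real p)\<rceil>) * real p
         \<le> 16 * pi * real (T * p) powr (3/2)"
proof -
  define s where "s = sqrt (real T * real p)"
  have "real T * real p \<ge> 1 * 1" using assms by (intro mult_mono) auto
  hence "s \<ge> 1" by (simp add: s_def)
  have "1 \<le> 2 * pi * real T * s"
    using \<open>s \<ge> 1\<close> assms pi_ge_two mult_mono[of 1 "2 * pi" 1 "real T"] mult_mono[of 1 "2 * pi * real T" 1 s]
    by simp
  have "real (nat \<lceil>2 * pi * real T * s\<rceil>) \<le> 2 * pi * real T * s + 1"
    using \<open>s \<ge> 1\<close> by (simp add: of_int_ceiling_le_add_one)
  hence "4 * real (nat \<lceil>2 * pi * real T * s\<rceil>) * real p \<le> 4 * (2 * pi * real T * s + 1) * real p"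
    by (intro mult_right_mono) auto
  also have "\<dots> \<le> 4 * (2 * (2 * pi * real T * s)) * real p"
    using \<open>1 \<le> 2 * pi * real T * s\<close> by (intro mult_right_mono) (simp_all add: mult_ac)
  also have "\<dots> = 16 * pi * ((real T * real p) * s)" by (simp add: algebra_simps)
  also have "(real T * real p) * s = real (T * p) powr (3/2)"
    using powr_add[of "real (T * p)" 1 "1/2"] \<open>real T * real p \<ge> 1 * 1\<close>
    by (simp add: s_def powr_half_sqrt)
  finally show ?thesis by (simp add: s_def)
qed

theorem lemma11:
  fixes R T p :: nat
  assumes "R \<ge> 1" and "T \<ge> 1" and "p \<ge> 1"
  shows "\<exists>Z :: (nat \<Rightarrow> real) set.
           finite Z \<and> Z \<noteq> {} \<and>
           (\<forall>z\<in>Z. \<forall>j. j \<ge> T * p \<longrightarrow> z j = 0) \<and>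
           real (card Z) \<le> 16 * pi * real (T * p) powr (3/2) \<and>
           (\<forall>z\<in>Z. \<forall>j<T * p. \<bar>z j\<bar> \<le> 1) \<and>
           (\<forall>v :: nat \<Rightarrow> real. (\<forall>j. j \<ge> T * p \<longrightarrow> v j = 0) \<longrightarrow>
              toep_norm R T p v \<le> 4 * Max ((\<lambda>z. \<Sum>j<T * p. z j * v j) ` Z))"
proof -
  define K where "K = nat \<lceil>2 * pi * real T * sqrt (real T * real p)\<rceil>"
  have "K > 0" using assms by (simp add: K_def)
  have "real (card (toep_net K T p)) \<le> 4 * real K * real p"
    using card_toep_net[of K T p] by (metis of_nat_le_iff of_nat_mult of_nat_numeral)
  also have "\<dots> \<le> 16 * pi * real (T * p) powr (3/2)"
    unfolding K_def by (rule net_size_le[OF assms(2,3)])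
  finally have card: "real (card (toep_net K T p)) \<le> 16 * pi * real (T * p) powr (3/2)" .
  have "toep_net_vec K T p 0 0 0 \<in> toep_net K T p"
    using \<open>K > 0\<close> assms unfolding toep_net_def by force
  hence "toep_net K T p \<noteq> {}" by blast
  moreover have "\<forall>z\<in>toep_net K T p. \<forall>j. j \<ge> T * p \<longrightarrow> z j = 0"
    by (auto simp: toep_net_def toep_net_vec_def)
  moreover have "\<forall>z\<in>toep_net K T p. \<forall>j<T * p. \<bar>z j\<bar> \<le> 1"
    by (auto simp: toep_net_def abs_toep_net_vec_le)
  moreover have "\<forall>v. toep_norm R T p v \<le> 4 * Max ((\<lambda>z. \<Sum>j<T * p. z j * v j) ` toep_net K T p)"
    using assms by (intro allI toep_norm_le_net) (simp_all add: K_def)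
  ultimately show ?thesis using card finite_toep_net by (intro exI[of _ "toep_net K T p"]) simp
qed

end
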